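(* Let $\mathcal{B}$ be an abelian category and $f:V_1\to V_2$, $g:V_2\to V_3$ morphisms in $\mathcal{B}$. Let $(C,p)$ be the cokernel of $f$ (with $p:V_2\to C$) and $(K,i)$ the kernel of $g$ (with $i:K\to V_2$), and assume $p\circ i=0$. Then $$\widehat{\mathrm{Im}(f)}+\widehat{\mathrm{Im}(g)}=\widehat{V_2}+\widehat{\mathrm{Im}(g\circ f)}$$ in $K_0(\mathcal{B})$. Moreover, if $\mathcal{B}$ is the category of finite-dimensional vector spaces over a finite field $\mathbb{k}$, then $|\mathrm{Im}(f)|\cdot|\mathrm{Im}(g)|=|V_2|\cdot|\mathrm{Im}(g\circ f)|$.
   Context: $\widehat{V}$ denotes the class of an object $V$ in the Grothendieck group $K_0(\mathcal{B})$; $|V|$ denotes the cardinality of a finite set. *)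

theory Defs
  imports Main "HOL-Library.Function_Algebras" "HOL.Vector_Spaces"
begin

text \<open>A category given by a set of objects, a set of arrows with source/target,
  composition (cmp g f = g after f) and identities, together with a preadditive
  structure: zero arrows, addition and negation of parallel arrows.\<close>

record ('o, 'm) acat =
  ob  :: "'o set"
  ar  :: "'m set"
  src :: "'m \<Rightarrow> 'o"
  tgt :: "'m \<Rightarrow> 'o"
  cmp :: "'m \<Rightarrow> 'm \<Rightarrow> 'm"
  idt :: "'o \<Rightarrow> 'm"
  zr  :: "'o \<Rightarrow> 'o \<Rightarrow> 'm"
  pl  :: "'m \<Rightarrow> 'm \<Rightarrow> 'm"
  ng  :: "'m \<Rightarrow> 'm"

definition hom :: "('o,'m,'x) acat_scheme \<Rightarrow> 'o \<Rightarrow> 'o \<Rightarrow> 'm set" where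
  "hom C a b = {f \<in> ar C. src C f = a \<and> tgt C f = b}"

definition is_category :: "('o,'m,'x) acat_scheme \<Rightarrow> bool" where
  "is_category C \<longleftrightarrow>
    (\<forall>f\<in>ar C. src C f \<in> ob C \<and> tgt C f \<in> ob C) \<and>
    (\<forall>a\<in>ob C. idt C a \<in> hom C a a) \<and>
    (\<forall>f\<in>ar C. \<forall>g\<in>ar C. src C g = tgt C f \<longrightarrow> cmp C g f \<in> hom C (src C f) (tgt C g)) \<and>
    (\<forall>f\<in>ar C. cmp C (idt C (tgt C f)) f = f \<and> cmp C f (idt C (src C f)) = f) \<and>
    (\<forall>f\<in>ar C. \<forall>g\<in>ar C. \<forall>h\<in>ar C. src C g = tgt C f \<and> src C h = tgt C g \<longrightarrow>
        cmp C h (cmp C g f) = cmp C (cmp C h g) f)"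

definition is_preadditive :: "('o,'m,'x) acat_scheme \<Rightarrow> bool" where
  "is_preadditive C \<longleftrightarrow> is_category C \<and>
    (\<forall>a\<in>ob C. \<forall>b\<in>ob C.
       zr C a b \<in> hom C a b \<and>
       (\<forall>f\<in>hom C a b. \<forall>g\<in>hom C a b. pl C f g \<in> hom C a b) \<and>
       (\<forall>f\<in>hom C a b. ng C f \<in> hom C a b) \<and>
       (\<forall>f\<in>hom C a b. \<forall>g\<in>hom C a b. \<forall>h\<in>hom C a b. pl C (pl C f g) h = pl C f (pl C g h)) \<and>
       (\<forall>f\<in>hom C a b. \<forall>g\<in>hom C a b. pl C f g = pl C g f) \<and>
       (\<forall>f\<in>hom C a b. pl C f (zr C a b) = f) \<and>
       (\<forall>f\<in>hom C a b. pl C f (ng C f) = zr C a b)) \<and>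
    (\<forall>a\<in>ob C. \<forall>b\<in>ob C. \<forall>c\<in>ob C.
       (\<forall>f\<in>hom C a b. \<forall>g\<in>hom C a b. \<forall>h\<in>hom C b c.
          cmp C h (pl C f g) = pl C (cmp C h f) (cmp C h g)) \<and>
       (\<forall>f\<in>hom C b c. \<forall>g\<in>hom C b c. \<forall>h\<in>hom C a b.
          cmp C (pl C f g) h = pl C (cmp C f h) (cmp C g h)))"

definition is_mono :: "('o,'m,'x) acat_scheme \<Rightarrow> 'm \<Rightarrow> bool" where
  "is_mono C m \<longleftrightarrow> m \<in> ar C \<and>
    (\<forall>x\<in>ob C. \<forall>g\<in>hom C x (src C m). \<forall>h\<in>hom C x (src C m).
       cmp C m g = cmp C m h \<longrightarrow> g = h)"

definition is_epi :: "('o,'m,'x) acat_scheme \<Rightarrow> 'm \<Rightarrow> bool" where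
  "is_epi C e \<longleftrightarrow> e \<in> ar C \<and>
    (\<forall>x\<in>ob C. \<forall>g\<in>hom C (tgt C e) x. \<forall>h\<in>hom C (tgt C e) x.
       cmp C g e = cmp C h e \<longrightarrow> g = h)"

definition is_kernel :: "('o,'m,'x) acat_scheme \<Rightarrow> 'm \<Rightarrow> 'o \<Rightarrow> 'm \<Rightarrow> bool" where
  "is_kernel C f k i \<longleftrightarrow> f \<in> ar C \<and> k \<in> ob C \<and> i \<in> hom C k (src C f) \<and>
     cmp C f i = zr C k (tgt C f) \<and>
     (\<forall>x\<in>ob C. \<forall>h\<in>hom C x (src C f). cmp C f h = zr C x (tgt C f) \<longrightarrow>
        (\<exists>!u. u \<in> hom C x k \<and> cmp C i u = h))"

definition is_cokernel :: "('o,'m,'x) acat_scheme \<Rightarrow> 'm \<Rightarrow> 'o \<Rightarrow> 'm \<Rightarrow> bool" where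
  "is_cokernel C f c p \<longleftrightarrow> f \<in> ar C \<and> c \<in> ob C \<and> p \<in> hom C (tgt C f) c \<and>
     cmp C p f = zr C (src C f) c \<and>
     (\<forall>x\<in>ob C. \<forall>h\<in>hom C (tgt C f) x. cmp C h f = zr C (src C f) x \<longrightarrow>
        (\<exists>!u. u \<in> hom C c x \<and> cmp C u p = h))"

definition abelian_cat :: "('o,'m,'x) acat_scheme \<Rightarrow> bool" where
  "abelian_cat C \<longleftrightarrow> is_preadditive C \<and>
    \<comment> \<open>zero object\<close>
    (\<exists>z\<in>ob C. \<forall>a\<in>ob C. (\<exists>!f. f \<in> hom C z a) \<and> (\<exists>!f. f \<in> hom C a z)) \<and>
    \<comment> \<open>binary products (hence biproducts)\<close>
    (\<forall>a\<in>ob C. \<forall>b\<in>ob C. \<exists>p\<in>ob C. \<exists>p1\<in>hom C p a. \<exists>p2\<in>hom C p b.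
       \<forall>x\<in>ob C. \<forall>f\<in>hom C x a. \<forall>g\<in>hom C x b.
         \<exists>!u. u \<in> hom C x p \<and> cmp C p1 u = f \<and> cmp C p2 u = g) \<and>
    \<comment> \<open>kernels and cokernels exist\<close>
    (\<forall>f\<in>ar C. \<exists>k i. is_kernel C f k i) \<and>
    (\<forall>f\<in>ar C. \<exists>c p. is_cokernel C f c p) \<and>
    \<comment> \<open>every mono is a kernel, every epi is a cokernel\<close>
    (\<forall>m. is_mono C m \<longrightarrow> (\<exists>f\<in>ar C. is_kernel C f (src C m) m)) \<and>
    (\<forall>e. is_epi C e \<longrightarrow> (\<exists>f\<in>ar C. is_cokernel C f (tgt C e) e))"

definition is_image :: "('o,'m,'x) acat_scheme \<Rightarrow> 'm \<Rightarrow> 'o \<Rightarrow> bool" where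
  "is_image C f I \<longleftrightarrow> (\<exists>c p j. is_cokernel C f c p \<and> is_kernel C p I j)"

definition short_exact :: "('o,'m,'x) acat_scheme \<Rightarrow> 'o \<Rightarrow> 'o \<Rightarrow> 'o \<Rightarrow> bool" where
  "short_exact C A B D \<longleftrightarrow> (\<exists>a b. a \<in> hom C A B \<and> b \<in> hom C B D \<and>
      is_kernel C b A a \<and> is_cokernel C a D b)"

text \<open>Free abelian group on the objects: finitely supported functions 'o \<Rightarrow> int;
  the generator of an object x is cls x.  K_0 is its quotient by the subgroup
  generated by [B] - [A] - [D] for short exact sequences 0 \<rightarrow> A \<rightarrow> B \<rightarrow> D \<rightarrow> 0.\<close>

definition cls :: "'o \<Rightarrow> ('o \<Rightarrow> int)" where
  "cls x = (\<lambda>y. if y = x then 1 else 0)"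

inductive_set K0_rel :: "('o,'m,'x) acat_scheme \<Rightarrow> ('o \<Rightarrow> int) set" for C where
  zero: "0 \<in> K0_rel C"
| gen: "A \<in> ob C \<Longrightarrow> B \<in> ob C \<Longrightarrow> D \<in> ob C \<Longrightarrow> short_exact C A B D \<Longrightarrow>
          cls B - cls A - cls D \<in> K0_rel C"
| diff: "x \<in> K0_rel C \<Longrightarrow> y \<in> K0_rel C \<Longrightarrow> x - y \<in> K0_rel C"

definition K0_eq :: "('o,'m,'x) acat_scheme \<Rightarrow> ('o \<Rightarrow> int) \<Rightarrow> ('o \<Rightarrow> int) \<Rightarrow> bool" where
  "K0_eq C u v \<longleftrightarrow> u - v \<in> K0_rel C"

end

theory Submission
  imports Defs "HOL-Library.FuncSet"
begin

(* Let K = Ker g and let j : Im f -> V2 be the image of f. The hypothesis p o i = 0 says that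
   K lies in Im f, so K is also the kernel of g o j : Im f -> V3. Since f = j o e with e epi,
   g o j has the same cokernel, hence the same image, as g o f. The short exact sequences
   0 -> K -> V2 -> Im g -> 0 and 0 -> K -> Im f -> Im (g o f) -> 0 then give the relation in K_0.
   For finite vector spaces the same argument is a count of fibres:
   |V2| = |Ker G| |Im G|, and |Im F| = |Ker G| |Im (G o F)| because Ker G is contained in Im F. *)

locale abelian_category =
  fixes C :: "('o, 'm, 'x) acat_scheme"
  assumes abelian: "abelian_cat C"
begin

lemma preadditive: "is_preadditive C"
  using abelian by (simp add: abelian_cat_def)

lemma category: "is_category C"
  using preadditive by (simp add: is_preadditive_def)

lemma hom_ob:
  assumes "f \<in> hom C a b"
  shows "a \<in> ob C" "b \<in> ob C"
  using assms category by (auto simp: is_category_def hom_def)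

lemma hom_src_tgt:
  assumes "f \<in> hom C a b"
  shows "f \<in> ar C" "src C f = a" "tgt C f = b"
  using assms by (simp_all add: hom_def)

lemma ar_hom: "f \<in> ar C \<Longrightarrow> f \<in> hom C (src C f) (tgt C f)"
  by (simp add: hom_def)

lemma comp_hom: "f \<in> hom C a b \<Longrightarrow> g \<in> hom C b c \<Longrightarrow> cmp C g f \<in> hom C a c"
  using category by (auto simp: is_category_def hom_def)

lemma comp_assoc:
  "f \<in> hom C a b \<Longrightarrow> g \<in> hom C b c \<Longrightarrow> h \<in> hom C c d \<Longrightarrow>
    cmp C h (cmp C g f) = cmp C (cmp C h g) f"
  using category by (auto simp: is_category_def hom_def)

lemma id_hom: "a \<in> ob C \<Longrightarrow> idt C a \<in> hom C a a"
  using category by (simp add: is_category_def)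

lemma comp_id_right: "f \<in> hom C a b \<Longrightarrow> cmp C f (idt C a) = f"
  using category by (auto simp: is_category_def hom_def)

lemma hom_group:
  assumes "a \<in> ob C" "b \<in> ob C"
  shows zero_hom: "zr C a b \<in> hom C a b"
    and add_hom: "f \<in> hom C a b \<Longrightarrow> g \<in> hom C a b \<Longrightarrow> pl C f g \<in> hom C a b"
    and neg_hom: "f \<in> hom C a b \<Longrightarrow> ng C f \<in> hom C a b"
    and add_assoc: "f \<in> hom C a b \<Longrightarrow> g \<in> hom C a b \<Longrightarrow> h \<in> hom C a b \<Longrightarrow>
      pl C (pl C f g) h = pl C f (pl C g h)"
    and add_commute: "f \<in> hom C a b \<Longrightarrow> g \<in> hom C a b \<Longrightarrow> pl C f g = pl C g f"
    and add_zero_right: "f \<in> hom C a b \<Longrightarrow> pl C f (zr C a b) = f"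
    and add_neg_right: "f \<in> hom C a b \<Longrightarrow> pl C f (ng C f) = zr C a b"
  using assms preadditive unfolding is_preadditive_def by blast+

lemma comp_add_left:
  "f \<in> hom C b c \<Longrightarrow> g \<in> hom C b c \<Longrightarrow> h \<in> hom C a b \<Longrightarrow>
    cmp C (pl C f g) h = pl C (cmp C f h) (cmp C g h)"
  using preadditive hom_ob unfolding is_preadditive_def by meson

lemma comp_add_right:
  "f \<in> hom C a b \<Longrightarrow> g \<in> hom C a b \<Longrightarrow> h \<in> hom C b c \<Longrightarrow>
    cmp C h (pl C f g) = pl C (cmp C h f) (cmp C h g)"
  using preadditive hom_ob unfolding is_preadditive_def by meson

lemma add_idem_imp_zero:
  assumes f: "f \<in> hom C a b" and idem: "pl C f f = f"
  shows "f = zr C a b"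
proof -
  note ob = hom_ob [OF f]
  have "f = pl C f (pl C f (ng C f))"
    using add_zero_right [OF ob f] add_neg_right [OF ob f] by simp
  also have "\<dots> = zr C a b"
    using add_assoc [OF ob f f neg_hom [OF ob f]] idem add_neg_right [OF ob f] by simp
  finally show ?thesis .
qed

lemma comp_zero_right:
  assumes h: "h \<in> hom C b c" and a: "a \<in> ob C"
  shows "cmp C h (zr C a b) = zr C a c"
proof (rule add_idem_imp_zero)
  have z: "zr C a b \<in> hom C a b"
    using zero_hom [OF a hom_ob(1) [OF h]] .
  show "cmp C h (zr C a b) \<in> hom C a c"
    using comp_hom [OF z h] .
  show "pl C (cmp C h (zr C a b)) (cmp C h (zr C a b)) = cmp C h (zr C a b)"
    using comp_add_right [OF z z h] add_zero_right [OF a hom_ob(1) [OF h] z] by simp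
qed

lemma comp_zero_left:
  assumes h: "h \<in> hom C a b" and c: "c \<in> ob C"
  shows "cmp C (zr C b c) h = zr C a c"
proof (rule add_idem_imp_zero)
  have z: "zr C b c \<in> hom C b c"
    using zero_hom [OF hom_ob(2) [OF h] c] .
  show "cmp C (zr C b c) h \<in> hom C a c"
    using comp_hom [OF h z] .
  show "pl C (cmp C (zr C b c) h) (cmp C (zr C b c) h) = cmp C (zr C b c) h"
    using comp_add_left [OF z z h] add_zero_right [OF hom_ob(2) [OF h] c z] by simp
qed

lemma eq_if_add_neg_eq_zero:
  assumes f: "f \<in> hom C a b" and g: "g \<in> hom C a b" and eq: "pl C f (ng C g) = zr C a b"
  shows "f = g"
proof -
  note ob = hom_ob [OF f]
  have "g = pl C g (pl C f (ng C g))"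
    using eq add_zero_right [OF ob g] by simp
  also have "\<dots> = pl C f (pl C g (ng C g))"
    using add_assoc [OF ob g f neg_hom [OF ob g]] add_assoc [OF ob f g neg_hom [OF ob g]]
      add_commute [OF ob f g] by simp
  also have "\<dots> = f"
    using add_neg_right [OF ob g] add_zero_right [OF ob f] by simp
  finally show ?thesis by simp
qed

lemma epiI_zero:
  assumes e: "e \<in> hom C a b"
    and zero: "\<And>x y. y \<in> hom C b x \<Longrightarrow> cmp C y e = zr C a x \<Longrightarrow> y = zr C b x"
  shows "is_epi C e"
  unfolding is_epi_def
proof (intro conjI ballI impI)
  show "e \<in> ar C"
    using hom_src_tgt [OF e] by simp
  fix x g h
  assume "g \<in> hom C (tgt C e) x" "h \<in> hom C (tgt C e) x" and eq: "cmp C g e = cmp C h e"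
  then have g: "g \<in> hom C b x" and h: "h \<in> hom C b x"
    using hom_src_tgt [OF e] by simp_all
  note ob = hom_ob [OF g]
  have nh: "ng C h \<in> hom C b x"
    using neg_hom [OF ob h] .
  have "cmp C (pl C g (ng C h)) e = cmp C (pl C h (ng C h)) e"
    using comp_add_left [OF g nh e] comp_add_left [OF h nh e] eq by simp
  also have "\<dots> = zr C a x"
    using add_neg_right [OF ob h] comp_zero_left [OF e ob(2)] by simp
  finally show "g = h"
    using eq_if_add_neg_eq_zero [OF g h] zero [OF add_hom [OF ob g nh]] by simp
qed

lemma kernel_exists: "f \<in> ar C \<Longrightarrow> \<exists>k i. is_kernel C f k i"
  using abelian by (simp add: abelian_cat_def)

lemma mono_is_kernel: "is_mono C m \<Longrightarrow> \<exists>f \<in> ar C. is_kernel C f (src C m) m"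
  using abelian by (simp add: abelian_cat_def)

lemma epi_is_cokernel: "is_epi C e \<Longrightarrow> \<exists>f \<in> ar C. is_cokernel C f (tgt C e) e"
  using abelian by (simp add: abelian_cat_def)

lemma kernelD:
  assumes "is_kernel C f k i"
  shows "f \<in> ar C" "k \<in> ob C" "i \<in> hom C k (src C f)" "cmp C f i = zr C k (tgt C f)"
  using assms by (simp_all add: is_kernel_def)

lemma kernel_lift_unique:
  "is_kernel C f k i \<Longrightarrow> h \<in> hom C x (src C f) \<Longrightarrow> cmp C f h = zr C x (tgt C f) \<Longrightarrow>
    \<exists>!u. u \<in> hom C x k \<and> cmp C i u = h"
  unfolding is_kernel_def using hom_ob(1) by blast

lemma kernel_lift:
  assumes "is_kernel C f k i" "h \<in> hom C x (src C f)" "cmp C f h = zr C x (tgt C f)"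
  obtains u where "u \<in> hom C x k" "cmp C i u = h"
  using kernel_lift_unique [OF assms] by blast

lemma kernelI:
  "f \<in> ar C \<Longrightarrow> k \<in> ob C \<Longrightarrow> i \<in> hom C k (src C f) \<Longrightarrow> cmp C f i = zr C k (tgt C f) \<Longrightarrow>
    (\<And>x h. h \<in> hom C x (src C f) \<Longrightarrow> cmp C f h = zr C x (tgt C f) \<Longrightarrow>
      \<exists>!u. u \<in> hom C x k \<and> cmp C i u = h) \<Longrightarrow>
    is_kernel C f k i"
  by (simp add: is_kernel_def)

lemma cokernelD:
  assumes "is_cokernel C f c p"
  shows "f \<in> ar C" "c \<in> ob C" "p \<in> hom C (tgt C f) c" "cmp C p f = zr C (src C f) c"
  using assms by (simp_all add: is_cokernel_def)

lemma cokernel_desc_unique: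
  "is_cokernel C f c p \<Longrightarrow> h \<in> hom C (tgt C f) x \<Longrightarrow> cmp C h f = zr C (src C f) x \<Longrightarrow>
    \<exists>!u. u \<in> hom C c x \<and> cmp C u p = h"
  unfolding is_cokernel_def using hom_ob(2) by blast

lemma cokernel_desc:
  assumes "is_cokernel C f c p" "h \<in> hom C (tgt C f) x" "cmp C h f = zr C (src C f) x"
  obtains u where "u \<in> hom C c x" "cmp C u p = h"
  using cokernel_desc_unique [OF assms] by blast

lemma cokernelI:
  "f \<in> ar C \<Longrightarrow> c \<in> ob C \<Longrightarrow> p \<in> hom C (tgt C f) c \<Longrightarrow> cmp C p f = zr C (src C f) c \<Longrightarrow>
    (\<And>x h. h \<in> hom C (tgt C f) x \<Longrightarrow> cmp C h f = zr C (src C f) x \<Longrightarrow>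
      \<exists>!u. u \<in> hom C c x \<and> cmp C u p = h) \<Longrightarrow>
    is_cokernel C f c p"
  by (simp add: is_cokernel_def)

lemma mono_cancel:
  "is_mono C m \<Longrightarrow> g \<in> hom C x (src C m) \<Longrightarrow> h \<in> hom C x (src C m) \<Longrightarrow>
    cmp C m g = cmp C m h \<Longrightarrow> g = h"
  unfolding is_mono_def using hom_ob(1) by blast

lemma epi_cancel:
  "is_epi C e \<Longrightarrow> g \<in> hom C (tgt C e) x \<Longrightarrow> h \<in> hom C (tgt C e) x \<Longrightarrow>
    cmp C g e = cmp C h e \<Longrightarrow> g = h"
  unfolding is_epi_def using hom_ob(2) by blast

lemma kernel_is_mono:
  assumes ker: "is_kernel C f k i"
  shows "is_mono C i"
  unfolding is_mono_def
proof (intro conjI ballI impI)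
  note i = kernelD(3) [OF ker]
  show "i \<in> ar C"
    using hom_src_tgt(1) [OF i] .
  fix x g h
  assume "g \<in> hom C x (src C i)" "h \<in> hom C x (src C i)" and eq: "cmp C i g = cmp C i h"
  then have g: "g \<in> hom C x k" and h: "h \<in> hom C x k"
    using hom_src_tgt(2) [OF i] by simp_all
  have "cmp C f (cmp C i g) = zr C x (tgt C f)"
    using comp_assoc [OF g i ar_hom [OF kernelD(1) [OF ker]]] kernelD(4) [OF ker]
      comp_zero_left [OF g] hom_ob(2) [OF ar_hom [OF kernelD(1) [OF ker]]] by simp
  with kernel_lift_unique [OF ker comp_hom [OF g i]] show "g = h"
    using g h eq by (metis (no_types, lifting))
qed

lemma mono_comp:
  assumes m: "is_mono C m" "m \<in> hom C a b" and n: "is_mono C n" "n \<in> hom C b c"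
  shows "is_mono C (cmp C n m)"
  unfolding is_mono_def
proof (intro conjI ballI impI)
  have nm: "cmp C n m \<in> hom C a c"
    using comp_hom [OF m(2) n(2)] .
  then show "cmp C n m \<in> ar C"
    by (rule hom_src_tgt)
  fix x g h
  assume "g \<in> hom C x (src C (cmp C n m))" "h \<in> hom C x (src C (cmp C n m))"
    and eq: "cmp C (cmp C n m) g = cmp C (cmp C n m) h"
  then have g: "g \<in> hom C x a" and h: "h \<in> hom C x a"
    using hom_src_tgt(2) [OF nm] by simp_all
  have "cmp C n (cmp C m g) = cmp C n (cmp C m h)"
    using eq comp_assoc [OF g m(2) n(2)] comp_assoc [OF h m(2) n(2)] by simp
  then have "cmp C m g = cmp C m h"
    using mono_cancel [OF n(1)] comp_hom [OF g m(2)] comp_hom [OF h m(2)] hom_src_tgt(2) [OF n(2)]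
    by simp
  then show "g = h"
    using mono_cancel [OF m(1)] g h hom_src_tgt(2) [OF m(2)] by simp
qed

lemma kernel_comp_mono:
  assumes m: "is_mono C m" "m \<in> hom C b c" and e: "e \<in> hom C a b"
    and ker: "is_kernel C (cmp C m e) k i"
  shows "is_kernel C e k i"
proof (rule kernelI)
  have me: "cmp C m e \<in> hom C a c"
    using comp_hom [OF e m(2)] .
  note src_tgt = hom_src_tgt [OF e] hom_src_tgt [OF me]
  show "e \<in> ar C" "k \<in> ob C"
    using src_tgt kernelD(2) [OF ker] by simp_all
  have i: "i \<in> hom C k a"
    using kernelD(3) [OF ker] src_tgt by simp
  then show "i \<in> hom C k (src C e)"
    using src_tgt by simp
  have "cmp C m (cmp C e i) = cmp C m (zr C k b)"
    using comp_assoc [OF i e m(2)] kernelD(4) [OF ker] comp_zero_right [OF m(2) kernelD(2) [OF ker]]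
      src_tgt by simp
  then show "cmp C e i = zr C k (tgt C e)"
    using mono_cancel [OF m(1)] comp_hom [OF i e] zero_hom [OF kernelD(2) [OF ker] hom_ob(1) [OF m(2)]]
      hom_src_tgt(2) [OF m(2)] src_tgt by simp
  fix x y
  assume y: "y \<in> hom C x (src C e)" and ey: "cmp C e y = zr C x (tgt C e)"
  have y': "y \<in> hom C x a"
    using y src_tgt by simp
  have "cmp C (cmp C m e) y = cmp C m (cmp C e y)"
    using comp_assoc [OF y' e m(2)] by simp
  also have "\<dots> = zr C x (tgt C (cmp C m e))"
    using ey comp_zero_right [OF m(2) hom_ob(1) [OF y']] src_tgt by simp
  finally show "\<exists>!u. u \<in> hom C x k \<and> cmp C i u = y"
    using kernel_lift_unique [OF ker] y src_tgt by simp
qed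

lemma cokernel_comp_epi:
  assumes e: "is_epi C e" "e \<in> hom C a b" and h: "h \<in> hom C b c"
    and coker: "is_cokernel C (cmp C h e) d q"
  shows "is_cokernel C h d q"
proof (rule cokernelI)
  have he: "cmp C h e \<in> hom C a c"
    using comp_hom [OF e(2) h] .
  note src_tgt = hom_src_tgt [OF h] hom_src_tgt [OF he]
  show "h \<in> ar C" "d \<in> ob C"
    using src_tgt cokernelD(2) [OF coker] by simp_all
  have q: "q \<in> hom C c d"
    using cokernelD(3) [OF coker] src_tgt by simp
  then show "q \<in> hom C (tgt C h) d"
    using src_tgt by simp
  have "cmp C (cmp C q h) e = cmp C (zr C b d) e"
    using comp_assoc [OF e(2) h q] cokernelD(4) [OF coker] comp_zero_left [OF e(2) cokernelD(2) [OF coker]]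
      src_tgt by simp
  then show "cmp C q h = zr C (src C h) d"
    using epi_cancel [OF e(1)] comp_hom [OF h q] zero_hom [OF hom_ob(2) [OF e(2)] cokernelD(2) [OF coker]]
      hom_src_tgt(3) [OF e(2)] src_tgt by simp
  fix x y
  assume y: "y \<in> hom C (tgt C h) x" and yh: "cmp C y h = zr C (src C h) x"
  have "cmp C y (cmp C h e) = zr C (src C (cmp C h e)) x"
    using comp_assoc [OF e(2) h] y yh comp_zero_left [OF e(2) hom_ob(2) [OF y]] src_tgt by simp
  then show "\<exists>!u. u \<in> hom C d x \<and> cmp C u q = y"
    using cokernel_desc_unique [OF coker] y src_tgt by simp
qed

lemma kernel_comp_mono_lift:
  assumes j: "is_mono C j" "j \<in> hom C a b" and g: "g \<in> hom C b c"
    and ker: "is_kernel C g k i" and i': "i' \<in> hom C k a" "cmp C j i' = i"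
  shows "is_kernel C (cmp C g j) k i'"
proof (rule kernelI)
  have gj: "cmp C g j \<in> hom C a c"
    using comp_hom [OF j(2) g] .
  note src_tgt = hom_src_tgt [OF g] hom_src_tgt [OF gj]
  show "cmp C g j \<in> ar C" "k \<in> ob C" "i' \<in> hom C k (src C (cmp C g j))"
    using src_tgt kernelD(2) [OF ker] i'(1) by simp_all
  show "cmp C (cmp C g j) i' = zr C k (tgt C (cmp C g j))"
    using comp_assoc [OF i'(1) j(2) g] i'(2) kernelD(4) [OF ker] src_tgt by simp
  fix x y
  assume "y \<in> hom C x (src C (cmp C g j))" and gjy: "cmp C (cmp C g j) y = zr C x (tgt C (cmp C g j))"
  then have y: "y \<in> hom C x a"
    using src_tgt by simp
  have "cmp C g (cmp C j y) = zr C x (tgt C g)"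
    using comp_assoc [OF y j(2) g] gjy src_tgt by simp
  then have lift: "\<exists>!u. u \<in> hom C x k \<and> cmp C i u = cmp C j y"
    using kernel_lift_unique [OF ker] comp_hom [OF y j(2)] src_tgt by simp
  have "cmp C i u = cmp C j y \<longleftrightarrow> cmp C i' u = y" if u: "u \<in> hom C x k" for u
  proof -
    have "cmp C i u = cmp C j (cmp C i' u)"
      using comp_assoc [OF u i'(1) j(2)] i'(2) by simp
    then show ?thesis
      using mono_cancel [OF j(1)] comp_hom [OF u i'(1)] y hom_src_tgt(2) [OF j(2)] by auto
  qed
  with lift show "\<exists>!u. u \<in> hom C x k \<and> cmp C i' u = y"
    by (metis (no_types, lifting))
qed

lemma image_factors_through_mono:
  assumes coker: "is_cokernel C h c q" and ker: "is_kernel C q I j"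
    and n: "is_mono C n" "n \<in> hom C M (tgt C h)"
    and e': "e' \<in> hom C (src C h) M" "cmp C n e' = h"
  obtains s where "s \<in> hom C I M" "cmp C n s = j"
proof -
  \<comment> \<open>n is the kernel of some \<phi>; \<phi> kills h, so it factors through q = coker h and kills j.\<close>
  obtain \<phi> where "\<phi> \<in> ar C" and ker_\<phi>: "is_kernel C \<phi> M n"
    using mono_is_kernel [OF n(1)] hom_src_tgt(2) [OF n(2)] by auto
  moreover have src_\<phi>: "src C \<phi> = tgt C h"
    using hom_src_tgt(3) [OF kernelD(3) [OF ker_\<phi>]] hom_src_tgt(3) [OF n(2)] by simp
  ultimately have \<phi>: "\<phi> \<in> hom C (tgt C h) (tgt C \<phi>)"
    using ar_hom by fastforce
  have "cmp C \<phi> h = cmp C (cmp C \<phi> n) e'"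
    using comp_assoc [OF e'(1) n(2) \<phi>] e'(2) by simp
  also have "\<dots> = zr C (src C h) (tgt C \<phi>)"
    using kernelD(4) [OF ker_\<phi>] comp_zero_left [OF e'(1) hom_ob(2) [OF \<phi>]]
      hom_src_tgt(2) [OF n(2)] by simp
  finally obtain w where w: "w \<in> hom C c (tgt C \<phi>)" and wq: "cmp C w q = \<phi>"
    using cokernel_desc [OF coker \<phi>] by blast
  have q: "q \<in> hom C (tgt C h) c"
    using cokernelD(3) [OF coker] .
  have j: "j \<in> hom C I (tgt C h)"
    using kernelD(3) [OF ker] hom_src_tgt(2) [OF q] by simp
  have "cmp C \<phi> j = cmp C w (cmp C q j)"
    using comp_assoc [OF j q w] wq by simp
  also have "\<dots> = zr C I (tgt C \<phi>)"
    using kernelD(4) [OF ker] comp_zero_right [OF w kernelD(2) [OF ker]] hom_src_tgt(3) [OF q] by simp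
  finally obtain s where "s \<in> hom C I M" "cmp C n s = j"
    using kernel_lift [OF ker_\<phi>, of j I] j src_\<phi> by auto
  with that show ?thesis .
qed

lemma image_factorization:
  assumes coker: "is_cokernel C h c q" and ker: "is_kernel C q I j"
  obtains e where "e \<in> hom C (src C h) I" "cmp C j e = h" "is_epi C e"
proof -
  have h: "h \<in> hom C (src C h) (tgt C h)"
    using ar_hom [OF cokernelD(1) [OF coker]] .
  have q: "q \<in> hom C (tgt C h) c"
    using cokernelD(3) [OF coker] .
  have j: "j \<in> hom C I (tgt C h)"
    using kernelD(3) [OF ker] hom_src_tgt(2) [OF q] by simp
  obtain e where e: "e \<in> hom C (src C h) I" and je: "cmp C j e = h"
    using kernel_lift [OF ker, of h] h cokernelD(4) [OF coker] hom_src_tgt(2,3) [OF q] by auto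
  \<comment> \<open>If y e = 0 then e factors through m = ker y, and minimality of the image makes m split epi.\<close>
  have "is_epi C e"
  proof (rule epiI_zero [OF e])
    fix x y
    assume y: "y \<in> hom C I x" and ye: "cmp C y e = zr C (src C h) x"
    obtain M m where ker_y: "is_kernel C y M m"
      using kernel_exists [OF hom_src_tgt(1) [OF y]] by blast
    have m: "m \<in> hom C M I"
      using kernelD(3) [OF ker_y] hom_src_tgt(2) [OF y] by simp
    obtain e' where e': "e' \<in> hom C (src C h) M" and me': "cmp C m e' = e"
      using kernel_lift [OF ker_y, of e] e ye hom_src_tgt(2,3) [OF y] by auto
    have jm: "is_mono C (cmp C j m)"
      using mono_comp [OF kernel_is_mono [OF ker_y] m kernel_is_mono [OF ker] j] .
    have "cmp C (cmp C j m) e' = h"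
      using comp_assoc [OF e' m j] me' je by simp
    then obtain s where s: "s \<in> hom C I M" and jms: "cmp C (cmp C j m) s = j"
      using image_factors_through_mono [OF coker ker jm comp_hom [OF m j] e'] by blast
    have "cmp C j (cmp C m s) = cmp C j (idt C I)"
      using comp_assoc [OF s m j] jms comp_id_right [OF j] by simp
    then have ms: "cmp C m s = idt C I"
      using mono_cancel [OF kernel_is_mono [OF ker]] comp_hom [OF s m] id_hom [OF hom_ob(1) [OF j]]
        hom_src_tgt(2) [OF j] by simp
    have "y = cmp C (cmp C y m) s"
      using comp_assoc [OF s m y] ms comp_id_right [OF y] by simp
    also have "\<dots> = zr C I x"
      using kernelD(4) [OF ker_y] comp_zero_left [OF s hom_ob(2) [OF y]] hom_src_tgt(2,3) [OF y] by simp
    finally show "y = zr C I x" .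
  qed
  with e je that show ?thesis by blast
qed

lemma epi_is_cokernel_of_kernel:
  assumes epi: "is_epi C e" and ker: "is_kernel C e k i"
  shows "is_cokernel C i (tgt C e) e"
proof (rule cokernelI)
  have e: "e \<in> hom C (src C e) (tgt C e)"
    using ar_hom [OF kernelD(1) [OF ker]] .
  have i: "i \<in> hom C k (src C e)"
    using kernelD(3) [OF ker] .
  obtain \<phi> where "\<phi> \<in> ar C" and coker_\<phi>: "is_cokernel C \<phi> (tgt C e) e"
    using epi_is_cokernel [OF epi] by blast
  moreover have "tgt C \<phi> = src C e"
    using hom_src_tgt(2) [OF cokernelD(3) [OF coker_\<phi>]] by simp
  ultimately have \<phi>: "\<phi> \<in> hom C (src C \<phi>) (src C e)"
    using ar_hom by fastforce
  obtain w where w: "w \<in> hom C (src C \<phi>) k" and iw: "cmp C i w = \<phi>"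
    using kernel_lift [OF ker \<phi>] cokernelD(4) [OF coker_\<phi>] hom_src_tgt(3) [OF \<phi>] by auto
  note src_tgt_i = hom_src_tgt [OF i]
  show "i \<in> ar C" "tgt C e \<in> ob C"
    using src_tgt_i(1) hom_ob(2) [OF e] .
  show "e \<in> hom C (tgt C i) (tgt C e)" "cmp C e i = zr C (src C i) (tgt C e)"
    using e kernelD(4) [OF ker] src_tgt_i(2,3) by simp_all
  fix x y
  assume "y \<in> hom C (tgt C i) x" and yi: "cmp C y i = zr C (src C i) x"
  then have y: "y \<in> hom C (src C e) x"
    using src_tgt_i(3) by simp
  have "cmp C y \<phi> = cmp C (cmp C y i) w"
    using comp_assoc [OF w i y] iw by simp
  also have "\<dots> = zr C (src C \<phi>) x"
    using yi comp_zero_left [OF w hom_ob(2) [OF y]] src_tgt_i(2) by simp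
  finally show "\<exists>!u. u \<in> hom C (tgt C e) x \<and> cmp C u e = y"
    using cokernel_desc_unique [OF coker_\<phi>] y hom_src_tgt(3) [OF \<phi>] by simp
qed

lemma short_exact_kernel_image:
  assumes ker: "is_kernel C h k i" and im: "is_image C h I"
  shows "short_exact C k (src C h) I"
proof -
  obtain c q j where coker: "is_cokernel C h c q" and ker_q: "is_kernel C q I j"
    using im by (auto simp: is_image_def)
  obtain e where e: "e \<in> hom C (src C h) I" and je: "cmp C j e = h" and epi: "is_epi C e"
    using image_factorization [OF coker ker_q] .
  have j: "j \<in> hom C I (tgt C h)"
    using kernelD(3) [OF ker_q] hom_src_tgt(2) [OF cokernelD(3) [OF coker]] by simp
  have ker_e: "is_kernel C e k i"
    using kernel_comp_mono [OF kernel_is_mono [OF ker_q] j e] ker je by simp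
  have "is_cokernel C i I e"
    using epi_is_cokernel_of_kernel [OF epi ker_e] hom_src_tgt(3) [OF e] by simp
  then show ?thesis
    unfolding short_exact_def using e kernelD(3) [OF ker] ker_e by blast
qed

lemma image_comp_epi:
  assumes e: "is_epi C e" "e \<in> hom C a b" and h: "h \<in> hom C b c"
    and im: "is_image C (cmp C h e) I"
  shows "is_image C h I"
  using im cokernel_comp_epi [OF e h] by (auto simp: is_image_def)

lemma short_exact_ob:
  assumes "short_exact C A B D"
  shows "A \<in> ob C" "B \<in> ob C" "D \<in> ob C"
  using assms hom_ob by (auto simp: short_exact_def)

lemma K0_eq_short_exact_common_kernel:
  assumes "short_exact C k A D" "short_exact C k A' D'"
  shows "K0_eq C (cls A' + cls D) (cls A + cls D')"
proof -
  have "cls A - cls k - cls D \<in> K0_rel C" "cls A' - cls k - cls D' \<in> K0_rel C"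
    using assms short_exact_ob by (blast intro: K0_rel.gen)+
  then have "(cls A' - cls k - cls D') - (cls A - cls k - cls D) \<in> K0_rel C"
    by (rule K0_rel.diff [rotated])
  then show ?thesis
    unfolding K0_eq_def by (simp add: algebra_simps)
qed

lemma K0_eq_images_comp:
  assumes "f \<in> ar C" "g \<in> ar C" and src_g: "src C g = tgt C f"
    and coker: "is_cokernel C f Cc p" and ker: "is_kernel C g K i" and pi: "cmp C p i = zr C K Cc"
    and im_f: "is_image C f I1" and im_g: "is_image C g I2" and im_gf: "is_image C (cmp C g f) I3"
  shows "K0_eq C (cls I1 + cls I2) (cls (tgt C f) + cls I3)"
proof -
  have f: "f \<in> hom C (src C f) (tgt C f)" and g: "g \<in> hom C (tgt C f) (tgt C g)"
    using ar_hom assms(1,2) src_g by fastforce+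
  obtain c1 p1 j1 where coker1: "is_cokernel C f c1 p1" and ker1: "is_kernel C p1 I1 j1"
    using im_f by (auto simp: is_image_def)
  obtain e1 where e1: "e1 \<in> hom C (src C f) I1" "cmp C j1 e1 = f" "is_epi C e1"
    using image_factorization [OF coker1 ker1] .
  have p1: "p1 \<in> hom C (tgt C f) c1"
    using cokernelD(3) [OF coker1] .
  have j1: "j1 \<in> hom C I1 (tgt C f)"
    using kernelD(3) [OF ker1] hom_src_tgt(2) [OF p1] by simp
  have i: "i \<in> hom C K (tgt C f)"
    using kernelD(3) [OF ker] src_g by simp
  obtain w where w: "w \<in> hom C Cc c1" and wp: "cmp C w p = p1"
    using cokernel_desc [OF coker p1 cokernelD(4) [OF coker1]] by blast
  have "cmp C p1 i = cmp C w (cmp C p i)"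
    using comp_assoc [OF i cokernelD(3) [OF coker] w] wp by simp
  also have "\<dots> = zr C K c1"
    using pi comp_zero_right [OF w kernelD(2) [OF ker]] by simp
  finally obtain i' where i': "i' \<in> hom C K I1" "cmp C j1 i' = i"
    using kernel_lift [OF ker1, of i K] i hom_src_tgt(2,3) [OF p1] by auto
  have ker_gj1: "is_kernel C (cmp C g j1) K i'"
    using kernel_comp_mono_lift [OF kernel_is_mono [OF ker1] j1 g ker i'] .
  have "cmp C (cmp C g j1) e1 = cmp C g f"
    using comp_assoc [OF e1(1) j1 g] e1(2) by simp
  then have im_gj1: "is_image C (cmp C g j1) I3"
    using image_comp_epi [OF e1(3,1) comp_hom [OF j1 g]] im_gf by simp
  have "short_exact C K (tgt C f) I2"
    using short_exact_kernel_image [OF ker im_g] src_g by simp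
  moreover have "short_exact C K I1 I3"
    using short_exact_kernel_image [OF ker_gj1 im_gj1] hom_src_tgt(2) [OF comp_hom [OF j1 g]] by simp
  ultimately show ?thesis
    by (rule K0_eq_short_exact_common_kernel)
qed

end

lemma (in additive) card_eq_card_kernel_mult_card_image:
  assumes finite_H: "finite H" and diff_closed: "\<And>x y. x \<in> H \<Longrightarrow> y \<in> H \<Longrightarrow> x - y \<in> H"
  shows "card H = card (H \<inter> {x. f x = 0}) * card (f ` H)"
proof -
  have fibre: "card {x \<in> H. f x = z} = card (H \<inter> {x. f x = 0})" if "z \<in> f ` H" for z
  proof -
    from that obtain y where y: "y \<in> H" "f y = z" by blast
    have "bij_betw (\<lambda>u. y - u) (H \<inter> {x. f x = 0}) {x \<in> H. f x = z}"
      by (rule bij_betw_byWitness[where f' = "\<lambda>x. y - x"])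
         (auto simp: diff y diff_closed)
    then show ?thesis by (simp add: bij_betw_same_card)
  qed
  have "card H = (\<Sum>z \<in> f ` H. card {x \<in> H. f x = z})"
    using sum.group [OF finite_H finite_imageI [OF finite_H] subset_refl, where g = f and h = "\<lambda>_. 1::nat"]
    by simp
  also have "\<dots> = card (H \<inter> {x. f x = 0}) * card (f ` H)"
    by (simp add: fibre)
  finally show ?thesis .
qed

lemma (in finite_dimensional_vector_space) finite_UNIV_if_finite_scalars:
  assumes "finite (UNIV :: 'a set)"
  shows "finite (UNIV :: 'b set)"
proof -
  have "UNIV = range (\<lambda>u. \<Sum>v \<in> Basis. scale (u v) v)"
    using span_finite [OF finite_Basis] span_Basis by simp
  also have "\<dots> = (\<lambda>u. \<Sum>v \<in> Basis. scale (u v) v) ` (Basis \<rightarrow>\<^sub>E UNIV)"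
    by (auto intro!: image_eqI [where x = "restrict _ Basis"] sum.cong)
  also have "finite \<dots>"
    using assms finite_Basis by (intro finite_imageI finite_PiE) auto
  finally show ?thesis .
qed

lemma card_range_mult_card_range_eq:
  fixes F :: "'a::ab_group_add \<Rightarrow> 'b::ab_group_add" and G :: "'b \<Rightarrow> 'c::ab_group_add"
  assumes "finite (UNIV :: 'b set)" "additive F" "additive G" "{y. G y = 0} \<subseteq> range F"
  shows "card (range F) * card (range G) = card (UNIV :: 'b set) * card (range (G \<circ> F))"
proof -
  have "card (UNIV :: 'b set) = card {y. G y = 0} * card (range G)"
    using additive.card_eq_card_kernel_mult_card_image [OF assms(3,1)] by simp
  moreover have "card (range F) = card (range F \<inter> {y. G y = 0}) * card (G ` range F)"
    using assms(1) by (intro additive.card_eq_card_kernel_mult_card_image [OF assms(3)])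
      (auto simp: additive.diff [OF assms(2), symmetric] intro: finite_subset)
  moreover have "range F \<inter> {y. G y = 0} = {y. G y = 0}" "G ` range F = range (G \<circ> F)"
    using assms(4) by (auto simp: image_comp)
  ultimately show ?thesis by simp
qed

lemma linear_imp_additive: "Vector_Spaces.linear s1 s2 f \<Longrightarrow> additive f"
  by (metis additive.intro linear_iff_module_hom module_hom.add)

theorem propositionA2:
  fixes C :: "('o, 'm) acat"
    and f g p i :: 'm and Cc K I1 I2 I3 :: 'o
    and s1 :: "'k::{field,finite} \<Rightarrow> 'a::ab_group_add \<Rightarrow> 'a"
    and s2 :: "'k \<Rightarrow> 'b::ab_group_add \<Rightarrow> 'b"
    and s3 :: "'k \<Rightarrow> 'c::ab_group_add \<Rightarrow> 'c"
    and B1 :: "'a set" and B2 :: "'b set" and B3 :: "'c set"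
    and F :: "'a \<Rightarrow> 'b" and G :: "'b \<Rightarrow> 'c"
  shows
   "(abelian_cat C \<and> f \<in> ar C \<and> g \<in> ar C \<and> src C g = tgt C f \<and>
      is_cokernel C f Cc p \<and> is_kernel C g K i \<and> cmp C p i = zr C K Cc \<and>
      is_image C f I1 \<and> is_image C g I2 \<and> is_image C (cmp C g f) I3
      \<longrightarrow> K0_eq C (cls I1 + cls I2) (cls (tgt C f) + cls I3))
    \<and>
    (finite_dimensional_vector_space s1 B1 \<and> finite_dimensional_vector_space s2 B2 \<and>
      finite_dimensional_vector_space s3 B3 \<and>
      Vector_Spaces.linear s1 s2 F \<and> Vector_Spaces.linear s2 s3 G \<and>
      {y. G y = 0} \<subseteq> range F
      \<longrightarrow> card (range F) * card (range G) = card (UNIV :: 'b set) * card (range (G \<circ> F)))"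
proof (intro conjI impI)
  assume H: "abelian_cat C \<and> f \<in> ar C \<and> g \<in> ar C \<and> src C g = tgt C f \<and>
      is_cokernel C f Cc p \<and> is_kernel C g K i \<and> cmp C p i = zr C K Cc \<and>
      is_image C f I1 \<and> is_image C g I2 \<and> is_image C (cmp C g f) I3"
  then interpret abelian_category C
    by unfold_locales blast
  show "K0_eq C (cls I1 + cls I2) (cls (tgt C f) + cls I3)"
    using H K0_eq_images_comp by blast
next
  assume H: "finite_dimensional_vector_space s1 B1 \<and> finite_dimensional_vector_space s2 B2 \<and>
      finite_dimensional_vector_space s3 B3 \<and>
      Vector_Spaces.linear s1 s2 F \<and> Vector_Spaces.linear s2 s3 G \<and>
      {y. G y = 0} \<subseteq> range F"
  then have "finite (UNIV :: 'b set)"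
    using finite_dimensional_vector_space.finite_UNIV_if_finite_scalars finite_UNIV by blast
  with H show "card (range F) * card (range G) = card (UNIV :: 'b set) * card (range (G \<circ> F))"
    by (intro card_range_mult_card_range_eq linear_imp_additive) blast+
qed

end
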